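(* Fix $\varepsilon\in(0,1/2)$. There is a constant $B(\varepsilon)\in(0,\infty)$ such that for every $N$ and every $\eta>0$ the following holds. If $V_N=\mathbb Z/2N\mathbb Z$ (with $2N\ge3$) and $(K_i)_{i\ge1}$ is any sequence with $K_i\in\mathcal Q_{\mathrm{lazy}}(\varepsilon)$ for all $i$, or if $V_N=\mathbb Z/(2N+1)\mathbb Z$ and $(K_i)_{i\ge1}$ is any sequence with $K_i\in\mathcal Q(\varepsilon)$ for all $i$, then for all $n\ge B(\varepsilon)N^2(1+\log_+(1/\eta))$, \[\max_{x,y,z\in V_N}\Bigl|\frac{K_{0,n}(x,z)}{K_{0,n}(y,z)}-1\Bigr|\le\eta.\] In particular, the total variation $\eta$-merging time of $\mathcal Q_{\mathrm{lazy}}(\varepsilon)$ on $\mathbb Z/2N\mathbb Z$ (resp. of $\mathcal Q(\varepsilon)$ on $\mathbb Z/(2N+1)\mathbb Z$) is at most $B(\varepsilon)N^2(1+\log_+(1/\eta))$.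
   Context: $Q$ is the simple random walk kernel on $\mathbb Z/p\mathbb Z$: $Q(x,y)=1/2$ if $y=x\pm1$, $0$ otherwise. For $\delta\in(-1/2,1/2)$, $Q_\delta=Q+\Delta_\delta$ with $\Delta_\delta(0,1)=\delta$, $\Delta_\delta(0,-1)=-\delta$, $\Delta_\delta(x,y)=0$ otherwise. $\mathcal Q(\varepsilon)=\{Q_\delta:\delta\in[-\varepsilon,\varepsilon]\}$ and $\mathcal Q_{\mathrm{lazy}}(\varepsilon)=\{\frac12(I+K):K\in\mathcal Q(\varepsilon)\}$. $K_{0,n}=K_1K_2\cdots K_n$ (matrix product). The family $\mathcal Q$ has total variation $\eta$-merging time at most $T$ if for every sequence $(K_i)$ with $K_i\in\mathcal Q$ and every $t>T$, $\max_{x,y}\|K_{0,t}(x,\cdot)-K_{0,t}(y,\cdot)\|_{\mathrm{TV}}\le\eta$, where $\|\mu-\nu\|_{\mathrm{TV}}=\sup_A(\mu(A)-\nu(A))$. Conventions $0/0=1$, $a/0=\infty$ for $a>0$. $\log_+t=\max(\log t,0)$. *)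

theory Defs
  imports Complex_Main
begin

text \<open>States of Z/pZ are represented by 0..<p; kernels are functions nat => nat => real,
  only their values on {0..<p} x {0..<p} matter.\<close>

type_synonym kernel = "nat \<Rightarrow> nat \<Rightarrow> real"

definition srw :: "nat \<Rightarrow> kernel" where
  "srw p x y = (if y = (x + 1) mod p then 1/2 else 0) + (if y = (x + p - 1) mod p then 1/2 else 0)"

definition Delta :: "nat \<Rightarrow> real \<Rightarrow> kernel" where
  "Delta p \<delta> x y = (if x = 0 \<and> y = 1 mod p then \<delta> else 0) - (if x = 0 \<and> y = (p - 1) mod p then \<delta> else 0)"

definition Qd :: "nat \<Rightarrow> real \<Rightarrow> kernel" where
  "Qd p \<delta> x y = srw p x y + Delta p \<delta> x y"

definition Qfam :: "nat \<Rightarrow> real \<Rightarrow> kernel set" where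
  "Qfam p \<epsilon> = {Qd p \<delta> | \<delta>. -\<epsilon> \<le> \<delta> \<and> \<delta> \<le> \<epsilon>}"

definition idK :: kernel where
  "idK x y = (if x = y then 1 else 0)"

definition Qlazy :: "nat \<Rightarrow> real \<Rightarrow> kernel set" where
  "Qlazy p \<epsilon> = {(\<lambda>x y. (idK x y + K x y) / 2) | K. K \<in> Qfam p \<epsilon>}"

definition kmult :: "nat \<Rightarrow> kernel \<Rightarrow> kernel \<Rightarrow> kernel" where
  "kmult p A B x z = (\<Sum>y<p. A x y * B y z)"

text \<open>K_{0,n} = K_1 K_2 ... K_n (K_{0,0} = identity).\<close>
fun kprod :: "nat \<Rightarrow> (nat \<Rightarrow> kernel) \<Rightarrow> nat \<Rightarrow> kernel" where
  "kprod p K 0 = idK"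
| "kprod p K (Suc n) = kmult p (kprod p K n) (K (Suc n))"

text \<open>|a/b - 1| <= eta with the conventions 0/0 = 1 and a/0 = infinity for a > 0
  (entries are nonnegative).\<close>
definition ratio_close :: "real \<Rightarrow> real \<Rightarrow> real \<Rightarrow> bool" where
  "ratio_close a b \<eta> = (if b = 0 then a = 0 else \<bar>a / b - 1\<bar> \<le> \<eta>)"

definition log_plus :: "real \<Rightarrow> real" where
  "log_plus t = max (ln t) 0"

definition tv :: "nat \<Rightarrow> (nat \<Rightarrow> real) \<Rightarrow> (nat \<Rightarrow> real) \<Rightarrow> real" where
  "tv p \<mu> \<nu> = Max ((\<lambda>A. (\<Sum>z\<in>A. \<mu> z) - (\<Sum>z\<in>A. \<nu> z)) ` Pow {0..<p})"

definition merging_time_le :: "nat \<Rightarrow> kernel set \<Rightarrow> real \<Rightarrow> real \<Rightarrow> bool" where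
  "merging_time_le p F \<eta> T = (\<forall>K. (\<forall>i\<ge>1. K i \<in> F) \<longrightarrow>
     (\<forall>t::nat. real t > T \<longrightarrow> (\<forall>x<p. \<forall>y<p. tv p (kprod p K t x) (kprod p K t y) \<le> \<eta>)))"

end

theory Submission
  imports Defs
begin

text \<open>Every kernel of \<open>Q(\<epsilon>)\<close> (or of its lazy version) differs from the simple (lazy) random walk
  \<open>P\<close> only in the row of \<open>0\<close>, by a relative perturbation of size \<open>\<theta> = 2\<epsilon>\<close> that is
  antisymmetric under the reflection \<open>x \<mapsto> -x\<close>. As \<open>P\<close> is reflection invariant, every product
  \<open>K\<^sub>0\<^sub>,\<^sub>n\<close> stays within a factor \<open>1 \<plusminus> \<theta>\<close> of \<open>P\<^sup>n\<close>. By Fourier analysis \<open>P\<^sup>m\<close> is within a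
  factor \<open>2\<close> of uniform once \<open>m \<ge> 360 N\<^sup>2\<close> (odd \<open>p\<close>, resp. laziness, rules out the eigenvalue
  \<open>-1\<close>). Hence every block of \<open>360 N\<^sup>2\<close> consecutive kernels is uniformly minorized, Doeblin's
  argument contracts the oscillation of each column of \<open>K\<^sub>0\<^sub>,\<^sub>n\<close> geometrically, and after
  \<open>O(N\<^sup>2 (1 + log\<^sub>+ (1/\<eta>)))\<close> steps the entries of each column agree up to a factor \<open>1 \<plusminus> \<eta>\<close>.
  Summing over a set of states gives the total variation bound.\<close>

lemma kmult_assoc: "kmult p (kmult p A B) C x z = kmult p A (kmult p B C) x z"
  unfolding kmult_def
  by (simp add: sum_distrib_left sum_distrib_right mult.assoc) (rule sum.swap)

lemma kprod_add:
  assumes "z < p"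
  shows "kprod p K (m + n) x z = kmult p (kprod p K m) (kprod p (\<lambda>i. K (m + i)) n) x z"
  using assms
proof (induction n arbitrary: z)
  case 0
  have "kmult p (kprod p K m) idK x z = (\<Sum>y<p. kprod p K m x y * (if y = z then 1 else 0))"
    by (simp add: kmult_def idK_def)
  also have "\<dots> = kprod p K m x z"
    using "0" by (simp add: if_distrib cong: if_cong)
  finally show ?case by simp
next
  case (Suc n)
  have "kprod p K (m + Suc n) x z = (\<Sum>y<p. kprod p K (m + n) x y * K (m + Suc n) y z)"
    by (simp add: kmult_def)
  also have "\<dots> = (\<Sum>y<p. kmult p (kprod p K m) (kprod p (\<lambda>i. K (m + i)) n) x y * K (m + Suc n) y z)"
    using Suc.IH by (intro sum.cong) auto
  also have "\<dots> = kmult p (kprod p K m) (kprod p (\<lambda>i. K (m + i)) (Suc n)) x z"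
    by (simp add: kmult_def [symmetric] kmult_assoc)
  finally show ?case .
qed

lemma kprod_nonneg:
  assumes "\<And>i y z. 1 \<le> i \<Longrightarrow> y < p \<Longrightarrow> z < p \<Longrightarrow> 0 \<le> K i y z" and "z < p"
  shows "0 \<le> kprod p K n x z"
  using assms(2)
proof (induction n arbitrary: z)
  case 0
  then show ?case by (simp add: idK_def)
next
  case (Suc n)
  then show ?case
    by (auto simp: kmult_def intro!: sum_nonneg mult_nonneg_nonneg assms(1))
qed

lemma kprod_row_sum:
  assumes "\<And>i y. 1 \<le> i \<Longrightarrow> y < p \<Longrightarrow> (\<Sum>z<p. K i y z) = 1" and "x < p"
  shows "(\<Sum>z<p. kprod p K n x z) = 1"
proof (induction n)
  case 0
  then show ?case using assms(2) by (simp add: idK_def)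
next
  case (Suc n)
  have "(\<Sum>z<p. kprod p K (Suc n) x z) = (\<Sum>y<p. kprod p K n x y * (\<Sum>z<p. K (Suc n) y z))"
    by (simp add: kmult_def sum_distrib_left) (rule sum.swap)
  also have "\<dots> = (\<Sum>y<p. kprod p K n x y)"
    using assms(1) by simp
  finally show ?case using Suc by simp
qed

section \<open>Comparison with a reflection-invariant kernel\<close>

definition neg_mod :: "nat \<Rightarrow> nat \<Rightarrow> nat" where
  "neg_mod p y = (p - y) mod p"

lemma neg_mod_lt: "0 < p \<Longrightarrow> neg_mod p y < p"
  by (simp add: neg_mod_def)

lemma neg_mod_eq: "y < p \<Longrightarrow> neg_mod p y = (if y = 0 then 0 else p - y)"
  by (auto simp: neg_mod_def)

lemma neg_mod_neg_mod: "y < p \<Longrightarrow> neg_mod p (neg_mod p y) = y"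
  by (simp add: neg_mod_eq)

lemma neg_mod_0 [simp]: "neg_mod p 0 = 0"
  by (simp add: neg_mod_def)

lemma sum_neg_mod: "0 < p \<Longrightarrow> (\<Sum>y<p. f (neg_mod p y)) = (\<Sum>y<p. f y)"
  by (rule sum.reindex_bij_witness[of _ "neg_mod p" "neg_mod p"])
    (auto simp: neg_mod_neg_mod neg_mod_lt)

locale reflection_perturbation =
  fixes p :: nat and P :: kernel and \<theta> :: real
  assumes p_pos: "0 < p"
    and theta_nonneg: "0 \<le> \<theta>"
    and P_nonneg: "\<And>y z. y < p \<Longrightarrow> z < p \<Longrightarrow> 0 \<le> P y z"
    and P_neg_mod: "\<And>y z. y < p \<Longrightarrow> z < p \<Longrightarrow> P (neg_mod p y) (neg_mod p z) = P y z"
begin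

definition admissible :: "kernel \<Rightarrow> bool" where
  "admissible Q \<longleftrightarrow> (\<forall>y z. 0 < y \<longrightarrow> y < p \<longrightarrow> z < p \<longrightarrow> Q y z = P y z)
     \<and> (\<forall>z<p. \<bar>Q 0 z - P 0 z\<bar> \<le> \<theta> * P 0 z)
     \<and> (\<forall>z<p. Q 0 z + Q 0 (neg_mod p z) = P 0 z + P 0 (neg_mod p z))"

abbreviation Pn :: "nat \<Rightarrow> kernel" where
  "Pn n \<equiv> kprod p (\<lambda>_. P) n"

lemma kprod_add_neg_mod:
  assumes K: "\<And>i. 1 \<le> i \<Longrightarrow> admissible (K i)" and "w < p" and "z < p"
  shows "kprod p K n w z + kprod p K n w (neg_mod p z) = Pn n w z + Pn n w (neg_mod p z)"
  using assms(3)
proof (induction n arbitrary: z)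
  case 0
  then show ?case by (simp add: idK_def)
next
  case (Suc n)
  define S where "S y = P y z + P y (neg_mod p z)" for y
  have rz: "neg_mod p z < p"
    using p_pos by (simp add: neg_mod_lt)
  have K_S: "K (Suc n) y z + K (Suc n) y (neg_mod p z) = S y" if "y < p" for y
    using K[of "Suc n"] Suc.prems rz that by (cases "y = 0") (auto simp: admissible_def S_def)
  have S_neg_mod: "S (neg_mod p y) = S y" if "y < p" for y
    using P_neg_mod[of "neg_mod p y" z] P_neg_mod[of "neg_mod p y" "neg_mod p z"] that Suc.prems rz p_pos
    by (simp add: S_def neg_mod_neg_mod neg_mod_lt)
  \<comment> \<open>as \<open>S\<close> is reflection invariant, \<open>\<Sum>y. f y * S y\<close> only depends on \<open>f y + f (neg_mod p y)\<close>\<close>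
  have symmetrise: "2 * (\<Sum>y<p. f y * S y) = (\<Sum>y<p. (f y + f (neg_mod p y)) * S y)" for f
  proof -
    have "(\<Sum>y<p. f y * S y) = (\<Sum>y<p. f (neg_mod p y) * S (neg_mod p y))"
      using sum_neg_mod[OF p_pos, of "\<lambda>y. f y * S y"] by simp
    also have "\<dots> = (\<Sum>y<p. f (neg_mod p y) * S y)"
      by (intro sum.cong) (auto simp: S_neg_mod)
    finally show ?thesis by (simp add: algebra_simps sum.distrib)
  qed
  have "kprod p K (Suc n) w z + kprod p K (Suc n) w (neg_mod p z)
      = (\<Sum>y<p. kprod p K n w y * (K (Suc n) y z + K (Suc n) y (neg_mod p z)))"
    by (simp add: kmult_def distrib_left sum.distrib)
  also have "\<dots> = (\<Sum>y<p. kprod p K n w y * S y)"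
    by (intro sum.cong) (auto simp: K_S)
  also have "\<dots> = (\<Sum>y<p. Pn n w y * S y)"
  proof -
    have "2 * (\<Sum>y<p. kprod p K n w y * S y) = 2 * (\<Sum>y<p. Pn n w y * S y)"
      unfolding symmetrise by (intro sum.cong) (auto simp: Suc.IH)
    then show ?thesis by simp
  qed
  also have "\<dots> = Pn (Suc n) w z + Pn (Suc n) w (neg_mod p z)"
    by (simp add: kmult_def S_def distrib_left sum.distrib)
  finally show ?case .
qed

lemma kprod_at_0:
  assumes "\<And>i. 1 \<le> i \<Longrightarrow> admissible (K i)" and "w < p"
  shows "kprod p K n w 0 = Pn n w 0"
  using kprod_add_neg_mod[OF assms, where z=0 and n=n] p_pos by simp

definition P_off0 :: kernel where
  "P_off0 y z = (if y = 0 then 0 else P y z)"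

abbreviation P_off0n :: "nat \<Rightarrow> kernel" where
  "P_off0n n \<equiv> kprod p (\<lambda>_. P_off0) n"

lemma P_off0n_nonneg: "z < p \<Longrightarrow> 0 \<le> P_off0n n w z"
  by (rule kprod_nonneg) (auto simp: P_off0_def P_nonneg)

lemma Pn_nonneg: "z < p \<Longrightarrow> 0 \<le> Pn n w z"
  by (rule kprod_nonneg) (auto simp: P_nonneg)

text \<open>Only the steps leaving \<open>0\<close> are perturbed, and by \<open>kprod_at_0\<close> the mass arriving at \<open>0\<close> is
  not; so the error is at most \<open>\<theta>\<close> times the \<open>P\<close>-mass of the paths through \<open>0\<close>, which is
  \<open>Pn n - P_off0n n\<close>.\<close>
lemma kprod_deviation_le:
  assumes K: "\<And>i. 1 \<le> i \<Longrightarrow> admissible (K i)" and w: "w < p" and "z < p"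
  shows "\<bar>kprod p K n w z - Pn n w z\<bar> \<le> \<theta> * (Pn n w z - P_off0n n w z)"
  using assms(3)
proof (induction n arbitrary: z)
  case 0
  then show ?case by (simp add: idK_def)
next
  case (Suc n)
  define D where "D y = kprod p K n w y - Pn n w y" for y
  define E where "E y = Pn n w y - P_off0n n w y" for y
  define d where "d = K (Suc n) 0 z - P 0 z"
  have adm: "admissible (K (Suc n))"
    using K by simp
  have K_eq: "K (Suc n) y z = P y z + (if y = 0 then d else 0)" if "y < p" for y
    using adm that Suc.prems by (cases "y = 0") (auto simp: admissible_def d_def)
  have d_le: "\<bar>d\<bar> \<le> \<theta> * P 0 z"
    using adm Suc.prems by (simp add: admissible_def d_def)
  have D0: "D 0 = 0"
    using kprod_at_0[OF K w] by (simp add: D_def)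
  have D_le: "\<bar>D y\<bar> \<le> \<theta> * E y" if "y < p" for y
    using Suc.IH that by (simp add: D_def E_def)
  have p0: "0 \<in> {..<p}"
    using p_pos by simp
  have "kprod p K (Suc n) w z - Pn (Suc n) w z
      = (\<Sum>y<p. kprod p K n w y * (P y z + (if y = 0 then d else 0))) - (\<Sum>y<p. Pn n w y * P y z)"
    by (simp add: kmult_def K_eq)
  also have "\<dots> = (\<Sum>y<p. D y * P y z) + Pn n w 0 * d"
    using p0 kprod_at_0[OF K w]
    by (simp add: D_def algebra_simps sum.distrib sum_subtractf if_distrib[of "\<lambda>t. _ * t"] cong: if_cong)
  finally have split: "kprod p K (Suc n) w z - Pn (Suc n) w z = (\<Sum>y<p. D y * P y z) + Pn n w 0 * d" .
  have "\<bar>\<Sum>y<p. D y * P y z\<bar> \<le> (\<Sum>y<p. \<bar>D y\<bar> * P y z)"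
    using P_nonneg Suc.prems by (auto intro!: order_trans[OF sum_abs] sum_mono simp: abs_mult)
  also have "\<dots> \<le> (\<Sum>y<p. (if y = 0 then 0 else \<theta> * E y * P y z))"
    using P_nonneg Suc.prems D_le D0 by (intro sum_mono) (auto intro: mult_right_mono)
  also have "\<dots> = \<theta> * ((\<Sum>y<p. E y * P y z) - E 0 * P 0 z)"
    using p0 by (simp add: sum.If_cases sum.remove sum_distrib_left algebra_simps
        flip: Diff_eq lessThan_def)
  finally have D_part: "\<bar>\<Sum>y<p. D y * P y z\<bar> \<le> \<theta> * ((\<Sum>y<p. E y * P y z) - E 0 * P 0 z)" .
  have Pn_part: "\<bar>Pn n w 0 * d\<bar> \<le> \<theta> * (Pn n w 0 * P 0 z)"
  proof -
    have "0 \<le> Pn n w 0"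
      using Pn_nonneg p_pos by blast
    from mult_right_mono[OF d_le this] this show ?thesis
      by (simp add: abs_mult algebra_simps)
  qed
  have "P_off0n (Suc n) w z = (\<Sum>y<p. P_off0n n w y * P y z) - P_off0n n w 0 * P 0 z"
    using p0 by (simp add: kmult_def P_off0_def if_distrib[of "\<lambda>t. _ * t"] sum.If_cases sum.remove
        flip: Diff_eq lessThan_def)
  then have E_sum: "(\<Sum>y<p. E y * P y z) + P_off0n n w 0 * P 0 z = Pn (Suc n) w z - P_off0n (Suc n) w z"
    by (simp add: kmult_def E_def sum_subtractf algebra_simps)
  have "\<bar>kprod p K (Suc n) w z - Pn (Suc n) w z\<bar> \<le> \<bar>\<Sum>y<p. D y * P y z\<bar> + \<bar>Pn n w 0 * d\<bar>"
    unfolding split by (rule abs_triangle_ineq)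
  also have "\<dots> \<le> \<theta> * ((\<Sum>y<p. E y * P y z) - E 0 * P 0 z) + \<theta> * (Pn n w 0 * P 0 z)"
    using D_part Pn_part by (rule add_mono)
  also have "\<dots> = \<theta> * ((\<Sum>y<p. E y * P y z) + P_off0n n w 0 * P 0 z)"
    by (simp add: E_def algebra_simps)
  finally show ?case
    unfolding E_sum .
qed

lemma kprod_relative_deviation_le:
  assumes "\<And>i. 1 \<le> i \<Longrightarrow> admissible (K i)" and "w < p" and "z < p"
  shows "\<bar>kprod p K n w z - Pn n w z\<bar> \<le> \<theta> * Pn n w z"
proof -
  have "\<theta> * (Pn n w z - P_off0n n w z) \<le> \<theta> * Pn n w z"
    using theta_nonneg P_off0n_nonneg[OF assms(3)] by (intro mult_left_mono) auto
  with kprod_deviation_le[OF assms] show ?thesis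
    by (rule order_trans)
qed

end

section \<open>Fourier analysis of the walk kernel\<close>

definition succ_mod :: "nat \<Rightarrow> nat \<Rightarrow> nat" where
  "succ_mod p y = (if y + 1 = p then 0 else y + 1)"

definition pred_mod :: "nat \<Rightarrow> nat \<Rightarrow> nat" where
  "pred_mod p y = (if y = 0 then p - 1 else y - 1)"

lemma succ_mod_lt: "y < p \<Longrightarrow> succ_mod p y < p"
  by (auto simp: succ_mod_def)

lemma pred_mod_lt: "y < p \<Longrightarrow> pred_mod p y < p"
  by (auto simp: pred_mod_def)

lemma eq_succ_mod_iff: "y < p \<Longrightarrow> z < p \<Longrightarrow> z = succ_mod p y \<longleftrightarrow> y = pred_mod p z"
  by (auto simp: succ_mod_def pred_mod_def)

lemma eq_pred_mod_iff: "y < p \<Longrightarrow> z < p \<Longrightarrow> z = pred_mod p y \<longleftrightarrow> y = succ_mod p z"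
  by (auto simp: succ_mod_def pred_mod_def)

lemma srw_eq:
  assumes "y < p"
  shows "srw p y z = (if z = succ_mod p y then 1/2 else 0) + (if z = pred_mod p y then 1/2 else 0)"
proof -
  have "(y + 1) mod p = succ_mod p y"
    using assms by (auto simp: succ_mod_def)
  moreover have "(y + p - 1) mod p = pred_mod p y"
  proof (cases "y = 0")
    case False
    then have "(y + p - 1) mod p = (y - 1) mod p"
      by (metis Nat.add_diff_assoc2 One_nat_def Suc_leI mod_add_self2 not_gr_zero)
    then show ?thesis using assms False by (simp add: pred_mod_def)
  qed (use assms in \<open>simp add: pred_mod_def\<close>)
  ultimately show ?thesis
    by (simp add: srw_def)
qed

definition walk_kernel :: "real \<Rightarrow> real \<Rightarrow> nat \<Rightarrow> kernel" where
  "walk_kernel a b p y z = a * idK y z + b * srw p y z"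

text \<open>The characters of \<open>\<int>/p\<int>\<close> diagonalise \<open>walk_kernel a b p\<close>, with eigenvalues
  \<open>a + b cos (2\<pi>k/p)\<close>; \<open>walk_fourier\<close> is the resulting expansion of its \<open>m\<close>-th power as a
  function of \<open>d = x - z\<close>.\<close>
definition walk_fourier :: "real \<Rightarrow> real \<Rightarrow> nat \<Rightarrow> nat \<Rightarrow> real \<Rightarrow> real" where
  "walk_fourier a b p m d =
     (1 / real p) * (\<Sum>k<p. cos (2 * pi * real k * d / real p) * (a + b * cos (2 * pi * real k / real p)) ^ m)"

lemma walk_fourier_periodic:
  assumes "0 < p"
  shows "walk_fourier a b p m (d + real p) = walk_fourier a b p m d"
proof -
  have "cos (2 * pi * real k * (d + real p) / real p) = cos (2 * pi * real k * d / real p)" for k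
  proof -
    have "2 * pi * real k * (d + real p) / real p = 2 * pi * real k * d / real p + 2 * real k * pi"
      using assms by (simp add: field_simps)
    then show ?thesis
      by (simp add: cos_add)
  qed
  then show ?thesis by (simp add: walk_fourier_def)
qed

lemma sum_cos_roots_of_unity:
  fixes d :: int
  assumes "d \<noteq> 0" and "\<bar>d\<bar> < int p"
  shows "(\<Sum>k<p. cos (2 * pi * real k * real_of_int d / real p)) = 0"
proof -
  have p: "0 < p" using assms by linarith
  define q where "q = cis (2 * pi * real_of_int d / real p)"
  have "q \<noteq> 1"
  proof
    assume "q = 1"
    then have "cos (2 * pi * real_of_int d / real p) = 1"
      unfolding q_def by (metis cis.sel(1) one_complex.sel(1))
    then obtain n :: int where "2 * pi * real_of_int d / real p = real_of_int n * 2 * pi"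
      by (auto simp: cos_one_2pi_int)
    then have "real_of_int d = real_of_int n * real p"
      using p by (simp add: field_simps)
    then have "d = n * int p"
      by (metis of_int_eq_iff of_int_mult of_int_of_nat_eq)
    then show False
      using assms by (cases "n = 0") (auto simp: abs_mult dest: mult_le_cancel_right1[THEN iffD1])
  qed
  moreover have "q ^ p = 1"
  proof -
    have "q ^ p = cis (real p * (2 * pi * real_of_int d / real p))"
      by (simp add: q_def DeMoivre)
    also have "real p * (2 * pi * real_of_int d / real p) = 2 * pi * real_of_int d"
      using p by simp
    finally show ?thesis by (simp add: complex_eq_iff)
  qed
  ultimately have "Re (\<Sum>k<p. q ^ k) = 0"
    using geometric_sum[of q p] by simp
  moreover have "Re (q ^ k) = cos (2 * pi * real k * real_of_int d / real p)" for k
    by (simp add: q_def DeMoivre algebra_simps)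
  ultimately show ?thesis by simp
qed

lemma walk_fourier_0:
  assumes "0 < p" and "x < p" and "z < p"
  shows "walk_fourier a b p 0 (real x - real z) = idK x z"
proof (cases "x = z")
  case True
  then show ?thesis using assms by (simp add: walk_fourier_def idK_def)
next
  case False
  have "(\<Sum>k<p. cos (2 * pi * real k * real_of_int (int x - int z) / real p)) = 0"
    using False assms by (intro sum_cos_roots_of_unity) auto
  then show ?thesis
    using False by (simp add: walk_fourier_def idK_def)
qed

lemma walk_fourier_Suc:
  "walk_fourier a b p (Suc m) d
     = a * walk_fourier a b p m d + b / 2 * (walk_fourier a b p m (d + 1) + walk_fourier a b p m (d - 1))"
proof -
  define c where "c k = 2 * pi * real k / real p" for k
  define u where "u k = 2 * pi * real k * d / real p" for k
  define ev where "ev k = a + b * cos (c k)" for k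
  have plus: "2 * pi * real k * (d + 1) / real p = u k + c k" for k
    unfolding u_def c_def by (simp add: distrib_left add_divide_distrib)
  have minus: "2 * pi * real k * (d - 1) / real p = u k - c k" for k
    unfolding u_def c_def by (simp add: right_diff_distrib diff_divide_distrib)
  \<comment> \<open>the eigenvalue equation, via \<open>cos (u + c) + cos (u - c) = 2 cos u cos c\<close>\<close>
  have eigen: "a * cos (u k) * ev k ^ m + b / 2 * (cos (u k + c k) * ev k ^ m + cos (u k - c k) * ev k ^ m)
      = cos (u k) * ev k ^ Suc m" for k
    by (simp add: cos_add cos_diff ev_def algebra_simps)
  have fourier_m: "walk_fourier a b p m d = (1 / real p) * (\<Sum>k<p. cos (u k) * ev k ^ m)"
    and fourier_plus: "walk_fourier a b p m (d + 1) = (1 / real p) * (\<Sum>k<p. cos (u k + c k) * ev k ^ m)"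
    and fourier_minus: "walk_fourier a b p m (d - 1) = (1 / real p) * (\<Sum>k<p. cos (u k - c k) * ev k ^ m)"
    and fourier_Suc: "walk_fourier a b p (Suc m) d = (1 / real p) * (\<Sum>k<p. cos (u k) * ev k ^ Suc m)"
    by (simp_all only: walk_fourier_def plus minus u_def ev_def c_def)
  have "a * walk_fourier a b p m d + b / 2 * (walk_fourier a b p m (d + 1) + walk_fourier a b p m (d - 1))
     = (1 / real p) * (\<Sum>k<p. a * cos (u k) * ev k ^ m
         + b / 2 * (cos (u k + c k) * ev k ^ m + cos (u k - c k) * ev k ^ m))"
    unfolding fourier_m fourier_plus fourier_minus
    by (simp add: sum.distrib sum_distrib_left algebra_simps)
  also have "\<dots> = walk_fourier a b p (Suc m) d"
    unfolding fourier_Suc eigen ..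
  finally show ?thesis by simp
qed

lemma kprod_walk_kernel:
  assumes p: "0 < p" and x: "x < p" and "z < p"
  shows "kprod p (\<lambda>_. walk_kernel a b p) m x z = walk_fourier a b p m (real x - real z)"
  using assms(3)
proof (induction m arbitrary: z)
  case 0
  then show ?case using walk_fourier_0[OF p x] by simp
next
  case (Suc m)
  let ?g = "\<lambda>y. walk_fourier a b p m (real x - real y)"
  have kernel: "walk_kernel a b p y z
      = a * idK y z + b / 2 * idK y (pred_mod p z) + b / 2 * idK y (succ_mod p z)" if "y < p" for y
    unfolding walk_kernel_def idK_def srw_eq[OF that] eq_succ_mod_iff[OF that Suc.prems]
      eq_pred_mod_iff[OF that Suc.prems]
    by simp
  have pick: "(\<Sum>y<p. f y * idK y w) = f w" if "w < p" for f :: "nat \<Rightarrow> real" and w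
    using that by (simp add: idK_def if_distrib[of "\<lambda>t. _ * t"] cong: if_cong)
  have "kprod p (\<lambda>_. walk_kernel a b p) (Suc m) x z = (\<Sum>y<p. ?g y * walk_kernel a b p y z)"
    by (simp add: kmult_def Suc.IH)
  also have "\<dots> = a * (\<Sum>y<p. ?g y * idK y z) + b / 2 * (\<Sum>y<p. ?g y * idK y (pred_mod p z))
      + b / 2 * (\<Sum>y<p. ?g y * idK y (succ_mod p z))"
    by (simp add: kernel distrib_left sum.distrib sum_distrib_left mult.left_commute)
  also have "\<dots> = a * ?g z + b / 2 * ?g (pred_mod p z) + b / 2 * ?g (succ_mod p z)"
    using Suc.prems by (simp add: pick pred_mod_lt succ_mod_lt)
  also have "?g (pred_mod p z) = walk_fourier a b p m (real x - real z + 1)"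
  proof (cases "z = 0")
    case True
    then have "real x - real (pred_mod p z) = (real x - real z + 1) - real p"
      using p by (simp add: pred_mod_def of_nat_diff)
    then have "?g (pred_mod p z) = walk_fourier a b p m (real x - real z + 1 - real p)"
      by (simp only:)
    also have "\<dots> = walk_fourier a b p m (real x - real z + 1)"
      using walk_fourier_periodic[OF p, of a b m "real x - real z + 1 - real p"] by simp
    finally show ?thesis .
  qed (simp add: pred_mod_def of_nat_diff algebra_simps)
  also have "?g (succ_mod p z) = walk_fourier a b p m (real x - real z - 1)"
  proof (cases "z + 1 = p")
    case True
    then have "real x - real (succ_mod p z) = (real x - real z - 1) + real p"
      by (simp add: succ_mod_def)
    then show ?thesis
      using walk_fourier_periodic[OF p, of a b m "real x - real z - 1"] by (simp only:)
  qed (simp add: succ_mod_def algebra_simps)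
  finally show ?case
    by (simp add: walk_fourier_Suc algebra_simps)
qed

lemma walk_fourier_deviation_le:
  assumes p: "0 < p" and "a + b = 1"
  shows "\<bar>walk_fourier a b p m d - 1 / real p\<bar>
    \<le> (1 / real p) * (\<Sum>k\<in>{1..<p}. \<bar>a + b * cos (2 * pi * real k / real p)\<bar> ^ m)"
proof -
  define t where "t k = cos (2 * pi * real k * d / real p) * (a + b * cos (2 * pi * real k / real p)) ^ m" for k
  have "{..<p} = insert 0 {1..<p}"
    using p by auto
  then have "walk_fourier a b p m d - 1 / real p = (1 / real p) * (\<Sum>k\<in>{1..<p}. t k)"
    using assms(2) by (simp add: walk_fourier_def t_def algebra_simps)
  moreover have "\<bar>\<Sum>k\<in>{1..<p}. t k\<bar> \<le> (\<Sum>k\<in>{1..<p}. \<bar>a + b * cos (2 * pi * real k / real p)\<bar> ^ m)"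
    by (rule order_trans[OF sum_abs], rule sum_mono)
      (simp add: t_def abs_mult power_abs mult_left_le_one_le)
  ultimately show ?thesis
    using p by (simp add: abs_mult divide_right_mono)
qed

section \<open>Spectral estimates\<close>

lemma sin_ge_third:
  fixes y :: real
  assumes "0 \<le> y" and "y \<le> 2"
  shows "y / 3 \<le> sin y"
proof -
  have "\<bar>sin y - (\<Sum>m<3. sin_coeff m * y ^ m)\<bar> \<le> inverse (fact 3) * \<bar>y\<bar> ^ 3"
    by (rule Maclaurin_sin_bound)
  moreover have "(\<Sum>m<3. sin_coeff m * y ^ m) = y"
    by (simp add: eval_nat_numeral sin_coeff_def)
  moreover have "inverse (fact 3 :: real) = 1 / 6"
    by (simp add: eval_nat_numeral)
  ultimately have "\<bar>sin y - y\<bar> \<le> y ^ 3 / 6"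
    using assms by simp
  then have "y - y ^ 3 / 6 \<le> sin y"
    using abs_ge_minus_self[of "sin y - y"] by linarith
  moreover have "y * y ^ 2 \<le> y * 4"
    using assms by (intro mult_left_mono) (auto simp: power2_eq_square intro: mult_mono[of y 2 y 2, simplified])
  ultimately show ?thesis
    by (simp add: power3_eq_cube power2_eq_square algebra_simps)
qed

lemma cos_le_one_minus_square:
  assumes "0 \<le> x" and "x \<le> pi"
  shows "cos x \<le> 1 - x ^ 2 / 18"
proof -
  have "x / 6 \<le> sin (x / 2)"
    using sin_ge_third[of "x / 2"] assms pi_less_4 by simp
  then have "(x / 6) ^ 2 \<le> sin (x / 2) ^ 2"
    using assms by (intro power_mono) auto
  moreover have "cos x = 1 - 2 * sin (x / 2) ^ 2"
    using cos_double_sin[of "x / 2"] by simp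
  ultimately show ?thesis
    by (simp add: power2_eq_square)
qed

lemma half_one_plus_cos_le_exp:
  assumes "0 \<le> x" and "x \<le> pi"
  shows "1/2 + 1/2 * cos x \<le> exp (- (x ^ 2 / 36))"
  using cos_le_one_minus_square[OF assms] exp_ge_add_one_self[of "- (x ^ 2 / 36)"] by linarith

lemma abs_cos_power_le:
  assumes "0 \<le> x" and "x \<le> pi"
  shows "\<bar>cos x\<bar> ^ m \<le> exp (- (x ^ 2 / 36)) ^ m + exp (- ((pi - x) ^ 2 / 36)) ^ m"
proof (cases "0 \<le> cos x")
  case True
  then have "\<bar>cos x\<bar> \<le> exp (- (x ^ 2 / 36))"
    using half_one_plus_cos_le_exp[OF assms] cos_le_one[of x] by linarith
  then have "\<bar>cos x\<bar> ^ m \<le> exp (- (x ^ 2 / 36)) ^ m"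
    by (intro power_mono) auto
  then show ?thesis
    by (simp add: add_increasing2)
next
  case False
  have "1/2 - cos x / 2 \<le> exp (- ((pi - x) ^ 2 / 36))"
    using half_one_plus_cos_le_exp[of "pi - x"] assms by simp
  then have "- cos x \<le> exp (- ((pi - x) ^ 2 / 36))"
    using cos_ge_minus_one[of x] by linarith
  then have "\<bar>cos x\<bar> \<le> exp (- ((pi - x) ^ 2 / 36))"
    using False by simp
  then have "\<bar>cos x\<bar> ^ m \<le> exp (- ((pi - x) ^ 2 / 36)) ^ m"
    by (intro power_mono) auto
  then show ?thesis
    by (simp add: add_increasing)
qed

lemma angle_le_pi:
  assumes "j \<le> p" and "0 < p"
  shows "pi * real j / real p \<le> pi"
proof -
  have "pi * real j \<le> pi * real p"
    using assms by (intro mult_left_mono) auto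
  then show ?thesis
    using assms by (simp add: divide_le_eq)
qed

lemma exp_angle_power_le:
  assumes "1 \<le> j" and "0 < p"
  shows "exp (- ((pi * real j / real p) ^ 2 / 36)) ^ m \<le> exp (- (real m / (10 * real p ^ 2))) ^ j"
proof -
  have "4 \<le> pi ^ 2"
    using pi_ge_two power_mono[of 2 pi 2] by simp
  moreover have "real j \<le> real j ^ 2"
    using assms by (simp add: power2_eq_square)
  ultimately have "4 * real j \<le> pi ^ 2 * real j ^ 2"
    by (intro mult_mono) auto
  then have "real j / (10 * real p ^ 2) \<le> (pi * real j / real p) ^ 2 / 36"
    using assms by (simp add: power_divide power_mult_distrib field_simps)
  then have "real m * (real j / (10 * real p ^ 2)) \<le> real m * ((pi * real j / real p) ^ 2 / 36)"
    by (rule mult_left_mono) simp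
  moreover have "real j * (real m / (10 * real p ^ 2)) = real m * (real j / (10 * real p ^ 2))"
    by simp
  ultimately have "real j * (real m / (10 * real p ^ 2)) \<le> real m * ((pi * real j / real p) ^ 2 / 36)"
    by simp
  then show ?thesis
    by (simp add: exp_of_nat_mult[symmetric])
qed

lemma sum_power_le_geometric:
  fixes r :: real
  assumes "finite A" and "inj_on h A" and "\<And>k. k \<in> A \<Longrightarrow> 1 \<le> h k" and "0 \<le> r" and "r < 1"
  shows "(\<Sum>k\<in>A. r ^ h k) \<le> r / (1 - r)"
proof -
  obtain M where "\<forall>j\<in>h ` A. j \<le> M"
    using assms(1) finite_nat_set_iff_bounded_le by blast
  then have sub: "h ` A \<subseteq> {1..M}"
    using assms(3) by auto
  have "(\<Sum>k\<in>A. r ^ h k) = (\<Sum>j\<in>h ` A. r ^ j)"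
    by (simp add: sum.reindex[OF assms(2)])
  also have "\<dots> \<le> (\<Sum>j=1..M. r ^ j)"
    using sub assms(4) by (intro sum_mono2) simp_all
  also have "\<dots> \<le> r / (1 - r)"
    using assms(4,5) by (simp add: sum_gp divide_right_mono)
  finally show ?thesis .
qed

lemma sum_reflection_le:
  fixes f h :: "nat \<Rightarrow> real"
  assumes "N < p" and "p \<le> 2 * N + 1"
    and f_reflect: "\<And>k. 1 \<le> k \<Longrightarrow> k < p \<Longrightarrow> f k = f (p - k)"
    and f_le: "\<And>k. 1 \<le> k \<Longrightarrow> k \<le> N \<Longrightarrow> f k \<le> h k"
    and f_nonneg: "\<And>k. 0 \<le> f k"
  shows "(\<Sum>k\<in>{1..<p}. f k) \<le> 2 * (\<Sum>k\<in>{1..N}. h k)"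
proof -
  define h' where "h' j = (if 1 \<le> j \<and> j \<le> N then h j else 0)" for j
  have h'_nonneg: "0 \<le> h' j" for j
    using f_le[of j] f_nonneg[of j] by (auto simp: h'_def)
  have "f k \<le> h' k + h' (p - k)" if "k \<in> {1..<p}" for k
  proof (cases "k \<le> N")
    case True
    then show ?thesis using that f_le[of k] h'_nonneg[of "p - k"] by (simp add: h'_def)
  next
    case False
    then have "1 \<le> p - k" "p - k \<le> N"
      using that assms(1,2) by auto
    then show ?thesis
      using that f_reflect[of k] f_le[of "p - k"] h'_nonneg[of k] by (simp add: h'_def)
  qed
  then have "(\<Sum>k\<in>{1..<p}. f k) \<le> (\<Sum>k\<in>{1..<p}. h' k + h' (p - k))"
    by (rule sum_mono)
  also have "\<dots> = (\<Sum>k\<in>{1..<p}. h' k) + (\<Sum>k\<in>{1..<p}. h' (p - k))"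
    by (rule sum.distrib)
  also have "(\<Sum>k\<in>{1..<p}. h' (p - k)) = (\<Sum>k\<in>{1..<p}. h' k)"
    by (rule sum.reindex_bij_witness[of _ "\<lambda>k. p - k" "\<lambda>k. p - k"]) auto
  also have "(\<Sum>k\<in>{1..<p}. h' k) = (\<Sum>k\<in>{1..N}. h k)"
    using assms(1) by (auto simp: h'_def intro: sum.mono_neutral_cong_right)
  finally show ?thesis by simp
qed

lemma cos_reflect:
  assumes "k \<le> p"
  shows "cos (2 * pi * real (p - k) / real p) = cos (2 * pi * real k / real p)"
proof (cases "p = 0")
  case False
  then have "2 * pi * real (p - k) / real p = 2 * pi - 2 * pi * real k / real p"
    using assms by (simp add: of_nat_diff field_simps)
  then show ?thesis by (simp add: cos_diff)
qed (use assms in simp)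

lemma exp_mixing_rate_le:
  assumes "1 \<le> N" and "0 < p" and "real p ^ 2 \<le> 9 * real N ^ 2" and "360 * N ^ 2 \<le> m"
  shows "exp (- (real m / (10 * real p ^ 2))) \<le> 1 / 16"
proof -
  have "360 * real N ^ 2 \<le> real m"
    using assms(4) by (metis of_nat_le_iff of_nat_mult of_nat_numeral of_nat_power)
  then have "4 \<le> real m / (10 * real p ^ 2)"
    using assms(2,3) by (simp add: field_simps)
  moreover have "16 \<le> exp (4 :: real)"
  proof -
    have "(2 :: real) ^ 4 \<le> exp 1 ^ 4"
      using exp_ge_add_one_self[of 1] by (intro power_mono) auto
    then show ?thesis by (simp add: exp_of_nat_mult[symmetric])
  qed
  ultimately have "16 \<le> exp (real m / (10 * real p ^ 2))"
    by (meson exp_le_cancel_iff order_trans)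
  then show ?thesis
    by (simp add: exp_minus field_simps)
qed

lemma odd_cos_power_sum_le:
  assumes "1 \<le> N" and p: "p = 2 * N + 1" and "360 * N ^ 2 \<le> m"
  shows "(\<Sum>k\<in>{1..<p}. \<bar>cos (2 * pi * real k / real p)\<bar> ^ m) \<le> 1 / 2"
proof -
  define r where "r = exp (- (real m / (10 * real p ^ 2)))"
  have Np: "N < p" "p \<le> 2 * N + 1" "0 < p"
    using p by auto
  have "real p ^ 2 \<le> 9 * real N ^ 2"
    using p assms(1) power_mono[of "real p" "3 * real N" 2] by (simp add: power_mult_distrib)
  from exp_mixing_rate_le[OF assms(1) Np(3) this assms(3)] have r: "0 \<le> r" "r \<le> 1 / 16"
    unfolding r_def by auto
  have "\<bar>cos (2 * pi * real k / real p)\<bar> ^ m \<le> r ^ (2 * k) + r ^ (p - 2 * k)"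
    if k: "1 \<le> k" "k \<le> N" for k
  proof -
    define x where "x = pi * real (2 * k) / real p"
    have x_eq: "2 * pi * real k / real p = x"
      by (simp add: x_def)
    have "2 * k \<le> p"
      using k p by simp
    from angle_le_pi[OF this Np(3)] have x: "0 \<le> x" "x \<le> pi"
      by (simp_all add: x_def)
    have pi_x: "pi - x = pi * real (p - 2 * k) / real p"
      using k p by (simp add: x_def of_nat_diff field_simps)
    have "exp (- (x ^ 2 / 36)) ^ m \<le> r ^ (2 * k)"
      unfolding r_def x_def by (rule exp_angle_power_le) (use k Np in auto)
    moreover have "exp (- ((pi - x) ^ 2 / 36)) ^ m \<le> r ^ (p - 2 * k)"
      unfolding r_def pi_x by (rule exp_angle_power_le) (use k p in auto)
    ultimately show ?thesis
      unfolding x_eq using abs_cos_power_le[OF x, of m] by simp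
  qed
  moreover have "\<bar>cos (2 * pi * real k / real p)\<bar> ^ m = \<bar>cos (2 * pi * real (p - k) / real p)\<bar> ^ m"
    if "k < p" for k
    using that cos_reflect[of k p] by (simp only: less_imp_le)
  ultimately have "(\<Sum>k\<in>{1..<p}. \<bar>cos (2 * pi * real k / real p)\<bar> ^ m)
      \<le> 2 * (\<Sum>k\<in>{1..N}. r ^ (2 * k) + r ^ (p - 2 * k))"
    by (intro sum_reflection_le[OF Np(1,2)]) auto
  also have "\<dots> \<le> 2 * (r / (1 - r) + r / (1 - r))"
    using r p by (simp only: sum.distrib, intro mult_left_mono add_mono sum_power_le_geometric)
      (auto simp: inj_on_def)
  also have "\<dots> \<le> 1 / 2"
    using r by (simp add: divide_le_eq)
  finally show ?thesis .
qed

lemma lazy_cos_power_sum_le: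
  assumes "1 \<le> N" and p: "p = 2 * N" and "360 * N ^ 2 \<le> m"
  shows "(\<Sum>k\<in>{1..<p}. \<bar>1/2 + 1/2 * cos (2 * pi * real k / real p)\<bar> ^ m) \<le> 1 / 2"
proof -
  define r where "r = exp (- (real m / (10 * real p ^ 2)))"
  have Np: "N < p" "p \<le> 2 * N + 1" "0 < p"
    using p assms(1) by auto
  have "real p ^ 2 \<le> 9 * real N ^ 2"
    using p by (simp add: power_mult_distrib)
  from exp_mixing_rate_le[OF assms(1) Np(3) this assms(3)] have r: "0 \<le> r" "r \<le> 1 / 16"
    unfolding r_def by auto
  have "\<bar>1/2 + 1/2 * cos (2 * pi * real k / real p)\<bar> ^ m \<le> r ^ (2 * k)"
    if k: "1 \<le> k" "k \<le> N" for k
  proof -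
    define x where "x = pi * real (2 * k) / real p"
    have x_eq: "2 * pi * real k / real p = x"
      by (simp add: x_def)
    have "2 * k \<le> p"
      using k p by simp
    from angle_le_pi[OF this Np(3)] have x: "0 \<le> x" "x \<le> pi"
      by (simp_all add: x_def)
    have "0 \<le> 1/2 + 1/2 * cos x"
      using cos_ge_minus_one[of x] by linarith
    then have "\<bar>1/2 + 1/2 * cos x\<bar> \<le> exp (- (x ^ 2 / 36))"
      using half_one_plus_cos_le_exp[OF x] by simp
    then have "\<bar>1/2 + 1/2 * cos x\<bar> ^ m \<le> exp (- (x ^ 2 / 36)) ^ m"
      by (intro power_mono) auto
    also have "\<dots> \<le> r ^ (2 * k)"
      unfolding r_def x_def by (rule exp_angle_power_le) (use k Np in auto)
    finally show ?thesis
      unfolding x_eq .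
  qed
  moreover have "\<bar>1/2 + 1/2 * cos (2 * pi * real k / real p)\<bar> ^ m
      = \<bar>1/2 + 1/2 * cos (2 * pi * real (p - k) / real p)\<bar> ^ m" if "k < p" for k
    using that cos_reflect[of k p] by (simp only: less_imp_le)
  ultimately have "(\<Sum>k\<in>{1..<p}. \<bar>1/2 + 1/2 * cos (2 * pi * real k / real p)\<bar> ^ m)
      \<le> 2 * (\<Sum>k\<in>{1..N}. r ^ (2 * k))"
    by (intro sum_reflection_le[OF Np(1,2)]) auto
  also have "\<dots> \<le> 2 * (r / (1 - r))"
    using r by (intro mult_left_mono sum_power_le_geometric) (auto simp: inj_on_def)
  also have "\<dots> \<le> 1 / 2"
    using r by (simp add: divide_le_eq)
  finally show ?thesis .
qed

section \<open>Contraction of the oscillation\<close>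

lemma minorized_average_bounds:
  fixes w g :: "nat \<Rightarrow> real"
  assumes "\<And>y. y < p \<Longrightarrow> c \<le> w y" and "(\<Sum>y<p. w y) = 1"
    and "\<And>y. y < p \<Longrightarrow> lo \<le> g y \<and> g y \<le> hi"
  shows "c * (\<Sum>y<p. g y) + (1 - real p * c) * lo \<le> (\<Sum>y<p. w y * g y)
    \<and> (\<Sum>y<p. w y * g y) \<le> c * (\<Sum>y<p. g y) + (1 - real p * c) * hi"
proof -
  define v where "v y = w y - c" for y
  have v_nonneg: "0 \<le> v y" if "y < p" for y
    using assms(1)[OF that] by (simp add: v_def)
  have v_sum: "(\<Sum>y<p. v y) = 1 - real p * c"
    using assms(2) by (simp add: v_def sum_subtractf)
  have split: "(\<Sum>y<p. w y * g y) = c * (\<Sum>y<p. g y) + (\<Sum>y<p. v y * g y)"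
    by (simp add: v_def algebra_simps sum.distrib sum_distrib_left sum_subtractf)
  have "(\<Sum>y<p. v y * lo) \<le> (\<Sum>y<p. v y * g y)" and "(\<Sum>y<p. v y * g y) \<le> (\<Sum>y<p. v y * hi)"
    using v_nonneg assms(3) by (auto intro!: sum_mono mult_left_mono)
  moreover have "(\<Sum>y<p. v y * lo) = (1 - real p * c) * lo" and "(\<Sum>y<p. v y * hi) = (1 - real p * c) * hi"
    using v_sum by (simp_all add: sum_distrib_right[symmetric])
  ultimately show ?thesis
    unfolding split by linarith
qed

definition minorization :: "real \<Rightarrow> real" where
  "minorization \<theta> = (1 - \<theta>) / 2"

definition initial_spread :: "real \<Rightarrow> real" where
  "initial_spread \<theta> = 3 * (1 + \<theta>) / (1 - \<theta>) - 1"

locale doeblin = reflection_perturbation +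
  fixes L :: nat
  assumes theta_less_1: "\<theta> < 1"
    and P_row_sum: "\<And>y. y < p \<Longrightarrow> (\<Sum>z<p. P y z) = 1"
    and L_pos: "1 \<le> L"
    and Pn_near_uniform: "\<And>m x z. L \<le> m \<Longrightarrow> x < p \<Longrightarrow> z < p
      \<Longrightarrow> 1 / (2 * real p) \<le> Pn m x z \<and> Pn m x z \<le> 3 / (2 * real p)"
begin

abbreviation \<alpha> :: real where
  "\<alpha> \<equiv> minorization \<theta>"

abbreviation R :: real where
  "R \<equiv> initial_spread \<theta>"

lemma minorization_bounds: "0 < \<alpha>" "\<alpha> \<le> 1"
  using theta_nonneg theta_less_1 by (auto simp: minorization_def)

lemma initial_spread_nonneg: "0 \<le> R"
  using theta_nonneg theta_less_1 by (simp add: initial_spread_def le_divide_eq)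

lemma admissible_nonneg:
  assumes "admissible Q" and "y < p" and "z < p"
  shows "0 \<le> Q y z"
proof (cases "y = 0")
  case True
  have "0 \<le> (1 - \<theta>) * P 0 z"
    using theta_less_1 P_nonneg[of 0 z] assms(3) p_pos by simp
  then show ?thesis
    using assms True unfolding admissible_def by (auto simp: abs_le_iff algebra_simps)
next
  case False
  then show ?thesis
    using assms P_nonneg unfolding admissible_def by auto
qed

lemma admissible_row_sum:
  assumes "admissible Q" and "y < p"
  shows "(\<Sum>z<p. Q y z) = 1"
proof (cases "y = 0")
  case True
  have "2 * (\<Sum>z<p. Q 0 z) = (\<Sum>z<p. Q 0 z + Q 0 (neg_mod p z))"
    using sum_neg_mod[OF p_pos, of "Q 0"] by (simp add: sum.distrib)
  also have "\<dots> = (\<Sum>z<p. P 0 z + P 0 (neg_mod p z))"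
    using assms(1) unfolding admissible_def by (intro sum.cong) auto
  also have "\<dots> = 2 * (\<Sum>z<p. P 0 z)"
    using sum_neg_mod[OF p_pos, of "P 0"] by (simp add: sum.distrib)
  finally show ?thesis
    using P_row_sum[of 0] p_pos True by simp
next
  case False
  then have "(\<Sum>z<p. Q y z) = (\<Sum>z<p. P y z)"
    using assms unfolding admissible_def by (intro sum.cong) auto
  then show ?thesis
    using P_row_sum assms(2) by simp
qed

lemma kprod_near_uniform:
  assumes "\<And>i. 1 \<le> i \<Longrightarrow> admissible (K i)" and "L \<le> m" and "x < p" and "z < p"
  shows "(1 - \<theta>) / (2 * real p) \<le> kprod p K m x z \<and> kprod p K m x z \<le> 3 * (1 + \<theta>) / (2 * real p)"
proof -
  have K: "\<bar>kprod p K m x z - Pn m x z\<bar> \<le> \<theta> * Pn m x z"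
    using kprod_relative_deviation_le[OF assms(1,3,4)] .
  have Pn: "1 / (2 * real p) \<le> Pn m x z" "Pn m x z \<le> 3 / (2 * real p)"
    using Pn_near_uniform[OF assms(2-4)] by auto
  have "(1 - \<theta>) * (1 / (2 * real p)) \<le> (1 - \<theta>) * Pn m x z"
    using Pn theta_less_1 by (intro mult_left_mono) auto
  moreover have "(1 + \<theta>) * Pn m x z \<le> (1 + \<theta>) * (3 / (2 * real p))"
    using Pn theta_nonneg by (intro mult_left_mono) auto
  ultimately show ?thesis
    using K by (auto simp: abs_le_iff algebra_simps)
qed

lemma oscillation_contracts:
  assumes K: "\<And>i. 1 \<le> i \<Longrightarrow> admissible (K i)" and s: "L \<le> s" and z: "z < p"
  shows "\<exists>lo hi. 0 < lo \<and> (\<forall>u<p. lo \<le> kprod p K (j * L + s) u z \<and> kprod p K (j * L + s) u z \<le> hi)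
            \<and> hi - lo \<le> (1 - \<alpha>) ^ j * R * lo"
  using K
proof (induction j arbitrary: K)
  case 0
  define lo where "lo = (1 - \<theta>) / (2 * real p)"
  define hi where "hi = 3 * (1 + \<theta>) / (2 * real p)"
  have "\<forall>u<p. lo \<le> kprod p K s u z \<and> kprod p K s u z \<le> hi"
    using kprod_near_uniform[OF "0" s _ z] by (simp add: lo_def hi_def)
  moreover have "0 < lo"
    using theta_less_1 p_pos by (simp add: lo_def)
  moreover have "hi - lo \<le> R * lo"
    using theta_less_1 p_pos by (simp add: lo_def hi_def initial_spread_def field_simps)
  ultimately show ?case by auto
next
  case (Suc j)
  let ?K' = "\<lambda>i. K (L + i)"
  obtain lo hi where lo: "0 < lo"
    and bounds: "\<forall>u<p. lo \<le> kprod p ?K' (j * L + s) u z \<and> kprod p ?K' (j * L + s) u z \<le> hi"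
    and width: "hi - lo \<le> (1 - \<alpha>) ^ j * R * lo"
    using Suc.IH[of ?K'] Suc.prems by auto
  define g where "g y = kprod p ?K' (j * L + s) y z" for y
  define S where "S = \<alpha> / real p * (\<Sum>y<p. g y)"
  have step: "kprod p K (Suc j * L + s) u z = (\<Sum>y<p. kprod p K L u y * kprod p ?K' (j * L + s) y z)" for u
    using kprod_add[OF z, of K L "j * L + s" u] by (simp add: kmult_def algebra_simps)
  have "S + (1 - \<alpha>) * lo \<le> kprod p K (Suc j * L + s) u z \<and> kprod p K (Suc j * L + s) u z \<le> S + (1 - \<alpha>) * hi"
    if u: "u < p" for u
  proof -
    have "\<alpha> / real p \<le> kprod p K L u y" if "y < p" for y
      using kprod_near_uniform[OF Suc.prems order_refl u that] by (simp add: minorization_def)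
    moreover have "(\<Sum>y<p. kprod p K L u y) = 1"
      using Suc.prems admissible_row_sum by (intro kprod_row_sum u) auto
    moreover have "lo \<le> g y \<and> g y \<le> hi" if "y < p" for y
      using bounds that by (simp add: g_def)
    ultimately have "S + (1 - \<alpha>) * lo \<le> (\<Sum>y<p. kprod p K L u y * g y)
        \<and> (\<Sum>y<p. kprod p K L u y * g y) \<le> S + (1 - \<alpha>) * hi"
      using minorized_average_bounds[of p "\<alpha> / real p" "kprod p K L u" lo g hi] p_pos
      by (simp add: S_def)
    then show ?thesis
      unfolding step g_def .
  qed
  moreover have "lo \<le> S + (1 - \<alpha>) * lo"
  proof -
    have "real p * lo \<le> (\<Sum>y<p. g y)"
      using bounds sum_mono[of "{..<p}" "\<lambda>_. lo" g] by (simp add: g_def)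
    then have "\<alpha> / real p * (real p * lo) \<le> S"
      unfolding S_def using minorization_bounds by (intro mult_left_mono) auto
    then show ?thesis
      using p_pos by (simp add: algebra_simps)
  qed
  moreover have "(1 - \<alpha>) * (hi - lo) \<le> (1 - \<alpha>) ^ Suc j * R * (S + (1 - \<alpha>) * lo)"
  proof -
    have "(1 - \<alpha>) * (hi - lo) \<le> (1 - \<alpha>) * ((1 - \<alpha>) ^ j * R * lo)"
      using width minorization_bounds by (intro mult_left_mono) auto
    also have "\<dots> \<le> (1 - \<alpha>) * ((1 - \<alpha>) ^ j * R * (S + (1 - \<alpha>) * lo))"
      using \<open>lo \<le> S + (1 - \<alpha>) * lo\<close> minorization_bounds initial_spread_nonneg
      by (intro mult_left_mono) auto
    finally show ?thesis by simp
  qed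
  ultimately show ?case
    using lo by (intro exI[of _ "S + (1 - \<alpha>) * lo"] exI[of _ "S + (1 - \<alpha>) * hi"])
      (auto simp: algebra_simps)
qed

lemma kprod_oscillation_le:
  assumes K: "\<And>i. 1 \<le> i \<Longrightarrow> admissible (K i)" and "L \<le> n" and "x < p" and "y < p" and z: "z < p"
  shows "0 < kprod p K n y z
    \<and> \<bar>kprod p K n x z - kprod p K n y z\<bar> \<le> (1 - \<alpha>) ^ (n div L - 1) * R * kprod p K n y z"
proof -
  define j where "j = n div L - 1"
  have "0 < n div L"
    using assms(2) L_pos by (simp add: div_greater_zero_iff)
  then have n_eq: "j * L + (n mod L + L) = n"
    unfolding j_def using div_mult_mod_eq[of n L] by (cases "n div L") auto
  obtain lo hi where lo: "0 < lo"
    and bounds: "\<forall>u<p. lo \<le> kprod p K n u z \<and> kprod p K n u z \<le> hi"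
    and width: "hi - lo \<le> (1 - \<alpha>) ^ j * R * lo"
    using oscillation_contracts[where K = K and s = "n mod L + L" and j = j, OF K _ z]
    unfolding n_eq by auto
  have x_bounds: "lo \<le> kprod p K n x z \<and> kprod p K n x z \<le> hi"
    and y_bounds: "lo \<le> kprod p K n y z \<and> kprod p K n y z \<le> hi"
    using bounds assms(3,4) by blast+
  then have "\<bar>kprod p K n x z - kprod p K n y z\<bar> \<le> hi - lo"
    unfolding abs_le_iff by linarith
  also have "\<dots> \<le> (1 - \<alpha>) ^ j * R * lo"
    by (rule width)
  also have "\<dots> \<le> (1 - \<alpha>) ^ j * R * kprod p K n y z"
    using y_bounds minorization_bounds initial_spread_nonneg by (intro mult_left_mono) auto
  finally show ?thesis
    using lo y_bounds unfolding j_def by auto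
qed

end

definition contraction_time :: "real \<Rightarrow> real \<Rightarrow> real" where
  "contraction_time \<alpha> R = (R + 2 * \<alpha> + 1) / \<alpha>"

lemma contraction_power_le:
  assumes \<alpha>: "0 < \<alpha>" "\<alpha> \<le> 1" and R: "0 \<le> R" and \<eta>: "0 < \<eta>" and L: "1 \<le> L"
    and n: "contraction_time \<alpha> R * real L * (1 + log_plus (1 / \<eta>)) \<le> real n"
  shows "L \<le> n \<and> (1 - \<alpha>) ^ (n div L - 1) * R \<le> \<eta>"
proof -
  define l where "l = log_plus (1 / \<eta>)"
  define j where "j = n div L - 1"
  have l: "0 \<le> l" "- ln \<eta> \<le> l"
    using \<eta> by (auto simp: l_def log_plus_def ln_div)
  have "contraction_time \<alpha> R * (1 + l) \<le> real n / real L"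
    using n L by (simp add: l_def le_divide_eq algebra_simps)
  then have "\<alpha> * (contraction_time \<alpha> R * (1 + l)) \<le> \<alpha> * (real n / real L)"
    using \<alpha> by (intro mult_left_mono) auto
  then have an: "(R + 2 * \<alpha> + 1) * (1 + l) \<le> \<alpha> * (real n / real L)"
    using \<alpha> by (simp add: contraction_time_def)
  moreover have "2 * \<alpha> + 1 \<le> (R + 2 * \<alpha> + 1) * (1 + l)"
    using R \<alpha> l by (simp add: algebra_simps add_nonneg_nonneg mult_nonneg_nonneg)
  ultimately have "\<alpha> \<le> \<alpha> * (real n / real L)"
    using \<alpha> by linarith
  then have "1 \<le> real n / real L"
    using \<alpha> by (metis mult.right_neutral mult_le_cancel_left_pos)
  then have "L \<le> n"
    using L by (simp add: le_divide_eq)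
  then have "0 < n div L"
    using L by (simp add: div_greater_zero_iff)
  have "n mod L < L"
    using L by simp
  then have "n < n div L * L + L"
    using div_mult_mod_eq[of n L] by linarith
  moreover have "j + 2 = n div L + 1"
    using \<open>0 < n div L\<close> by (simp add: j_def)
  ultimately have "n < (j + 2) * L"
    by (simp add: algebra_simps)
  then have "real n < real ((j + 2) * L)"
    by (simp only: of_nat_less_iff)
  then have "real n / real L < real j + 2"
    using L by (simp add: divide_less_eq algebra_simps)
  then have "\<alpha> * (real n / real L) \<le> \<alpha> * (real j + 2)"
    using \<alpha> by (intro mult_left_mono) auto
  then have "\<alpha> * (real n / real L) \<le> \<alpha> * real j + 2 * \<alpha>"
    by (simp add: algebra_simps)
  moreover have "R + 1 + l + 2 * \<alpha> \<le> (R + 2 * \<alpha> + 1) * (1 + l)"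
    using R \<alpha> l by (simp add: algebra_simps mult_nonneg_nonneg)
  ultimately have aj: "R + 1 + l \<le> \<alpha> * real j"
    using an by linarith
  have "(1 - \<alpha>) ^ j \<le> exp (- \<alpha>) ^ j"
    using \<alpha> exp_ge_add_one_self[of "- \<alpha>"] by (intro power_mono) auto
  also have "\<dots> = exp (- (\<alpha> * real j))"
    by (simp add: exp_of_nat_mult[symmetric] algebra_simps)
  also have "\<dots> \<le> exp (- (R + 1)) * exp (- l)"
    using aj by (simp add: exp_add[symmetric])
  finally have "(1 - \<alpha>) ^ j * R \<le> exp (- (R + 1)) * exp (- l) * R"
    using R by (rule mult_right_mono)
  also have "\<dots> = (R * exp (- (R + 1))) * exp (- l)"
    by simp
  also have "\<dots> \<le> 1 * \<eta>"
  proof (rule mult_mono)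
    have "R \<le> exp (R + 1)"
      using exp_ge_add_one_self[of "R + 1"] by linarith
    then have "R / exp (R + 1) \<le> 1"
      by (simp add: divide_le_eq)
    moreover have "exp (- (R + 1)) = 1 / exp (R + 1)"
      by (subst exp_minus) (simp add: inverse_eq_divide)
    ultimately show "R * exp (- (R + 1)) \<le> 1"
      by simp
    show "exp (- l) \<le> \<eta>"
      using l \<eta> exp_le_cancel_iff[of "- l" "ln \<eta>"] by simp
  qed auto
  finally show ?thesis
    using \<open>L \<le> n\<close> by (simp add: j_def)
qed

lemma ratio_close_iff:
  assumes "0 \<le> b"
  shows "ratio_close a b \<eta> \<longleftrightarrow> \<bar>a - b\<bar> \<le> \<eta> * b"
proof (cases "b = 0")
  case False
  then have "a / b - 1 = (a - b) / b"
    by (simp add: diff_divide_distrib)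
  then have "\<bar>a / b - 1\<bar> = \<bar>a - b\<bar> / b"
    using assms by simp
  then show ?thesis
    using assms False by (simp add: ratio_close_def divide_le_eq)
qed (simp add: ratio_close_def)

lemma tv_le_if_ratio_close:
  assumes close: "\<And>z. z < p \<Longrightarrow> ratio_close (\<mu> z) (\<nu> z) \<eta>"
    and nonneg: "\<And>z. z < p \<Longrightarrow> 0 \<le> \<nu> z" and total: "(\<Sum>z<p. \<nu> z) = 1" and "0 \<le> \<eta>"
  shows "tv p \<mu> \<nu> \<le> \<eta>"
proof -
  have "(\<Sum>z\<in>A. \<mu> z) - (\<Sum>z\<in>A. \<nu> z) \<le> \<eta>" if A: "A \<subseteq> {0..<p}" for A
  proof -
    have "(\<Sum>z\<in>A. \<mu> z) - (\<Sum>z\<in>A. \<nu> z) = (\<Sum>z\<in>A. \<mu> z - \<nu> z)"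
      by (simp add: sum_subtractf)
    also have "\<dots> \<le> (\<Sum>z\<in>A. \<eta> * \<nu> z)"
      using A close nonneg by (intro sum_mono) (auto simp: ratio_close_iff abs_le_iff)
    also have "\<dots> \<le> (\<Sum>z\<in>{0..<p}. \<eta> * \<nu> z)"
      using A nonneg \<open>0 \<le> \<eta>\<close> by (intro sum_mono2) auto
    also have "\<dots> = \<eta>"
      using total by (simp add: sum_distrib_left[symmetric] atLeast0LessThan)
    finally show ?thesis .
  qed
  then show ?thesis
    unfolding tv_def by (subst Max_le_iff) auto
qed

lemma tv_self: "tv p \<mu> \<mu> = 0"
proof -
  have "(\<lambda>A. (\<Sum>z\<in>A. \<mu> z) - (\<Sum>z\<in>A. \<mu> z)) ` Pow {0..<p} = {0}"
    by auto
  then show ?thesis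
    by (simp add: tv_def)
qed

definition ratio_merging_le :: "nat \<Rightarrow> kernel set \<Rightarrow> real \<Rightarrow> real \<Rightarrow> bool" where
  "ratio_merging_le p F \<eta> T \<longleftrightarrow> (\<forall>K. (\<forall>i\<ge>1. K i \<in> F) \<longrightarrow>
     (\<forall>n::nat. real n \<ge> T \<longrightarrow> (\<forall>x<p. \<forall>y<p. \<forall>z<p. ratio_close (kprod p K n x z) (kprod p K n y z) \<eta>)))"

lemma merging_on_singleton:
  assumes "0 < \<eta>"
  shows "ratio_merging_le 1 F \<eta> T \<and> merging_time_le 1 F \<eta> T"
  using assms by (auto simp: ratio_merging_le_def merging_time_le_def ratio_close_def tv_self)

context doeblin
begin

lemma kprod_ratio_close:
  assumes K: "\<And>i. 1 \<le> i \<Longrightarrow> admissible (K i)" and "0 < \<eta>"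
    and n: "contraction_time \<alpha> R * real L * (1 + log_plus (1 / \<eta>)) \<le> real n"
    and "x < p" and "y < p" and "z < p"
  shows "ratio_close (kprod p K n x z) (kprod p K n y z) \<eta>"
proof -
  have n_ge: "L \<le> n" and power: "(1 - \<alpha>) ^ (n div L - 1) * R \<le> \<eta>"
    using contraction_power_le[OF minorization_bounds initial_spread_nonneg \<open>0 < \<eta>\<close> L_pos n] by auto
  have pos: "0 < kprod p K n y z"
    using kprod_oscillation_le[OF K n_ge assms(4-6)] by auto
  have "\<bar>kprod p K n x z - kprod p K n y z\<bar> \<le> (1 - \<alpha>) ^ (n div L - 1) * R * kprod p K n y z"
    using kprod_oscillation_le[OF K n_ge assms(4-6)] by auto
  also have "\<dots> \<le> \<eta> * kprod p K n y z"
    using power pos by (intro mult_right_mono) auto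
  finally show ?thesis
    using pos by (simp add: ratio_close_iff)
qed

lemma admissible_family_merging:
  assumes F: "\<And>Q. Q \<in> F \<Longrightarrow> admissible Q" and "0 < \<eta>"
    and T: "contraction_time \<alpha> R * real L * (1 + log_plus (1 / \<eta>)) \<le> T"
  shows "ratio_merging_le p F \<eta> T \<and> merging_time_le p F \<eta> T"
proof -
  have close: "ratio_close (kprod p K n x z) (kprod p K n y z) \<eta>"
    if "\<forall>i\<ge>1. K i \<in> F" "T \<le> real n" "x < p" "y < p" "z < p" for K n x y z
    using that F T by (intro kprod_ratio_close[OF _ \<open>0 < \<eta>\<close>]) auto
  have "tv p (kprod p K n x) (kprod p K n y) \<le> \<eta>"
    if K: "\<forall>i\<ge>1. K i \<in> F" and "T < real n" "x < p" "y < p" for K n x y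
  proof (rule tv_le_if_ratio_close)
    show "ratio_close (kprod p K n x z) (kprod p K n y z) \<eta>" if "z < p" for z
      using close that K \<open>T < real n\<close> \<open>x < p\<close> \<open>y < p\<close> by simp
    show "0 \<le> kprod p K n y z" if "z < p" for z
      using K F admissible_nonneg that by (intro kprod_nonneg) auto
    show "(\<Sum>z<p. kprod p K n y z) = 1"
      using K F admissible_row_sum \<open>y < p\<close> by (intro kprod_row_sum) auto
  qed (use \<open>0 < \<eta>\<close> in simp)
  with close show ?thesis
    unfolding ratio_merging_le_def merging_time_le_def by auto
qed

end

lemma neg_mod_eq_succ_mod_iff:
  assumes "3 \<le> p" and "y < p" and "z < p"
  shows "neg_mod p z = succ_mod p (neg_mod p y) \<longleftrightarrow> z = pred_mod p y"
  using assms by (cases "y = 0"; cases "z = 0") (auto simp: neg_mod_eq succ_mod_def pred_mod_def)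

lemma neg_mod_eq_pred_mod_iff:
  assumes "3 \<le> p" and "y < p" and "z < p"
  shows "neg_mod p z = pred_mod p (neg_mod p y) \<longleftrightarrow> z = succ_mod p y"
  using assms by (cases "y = 0"; cases "z = 0") (auto simp: neg_mod_eq succ_mod_def pred_mod_def)

lemma srw_neg_mod:
  assumes "3 \<le> p" and "y < p" and "z < p"
  shows "srw p (neg_mod p y) (neg_mod p z) = srw p y z"
proof -
  have "neg_mod p y < p"
    using assms by (simp add: neg_mod_lt)
  then show ?thesis
    unfolding srw_eq[OF assms(2)] srw_eq[OF \<open>neg_mod p y < p\<close>]
      neg_mod_eq_succ_mod_iff[OF assms] neg_mod_eq_pred_mod_iff[OF assms]
    by simp
qed

lemma idK_neg_mod: "y < p \<Longrightarrow> z < p \<Longrightarrow> idK (neg_mod p y) (neg_mod p z) = idK y z"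
  by (auto simp: idK_def neg_mod_eq)

lemma srw_row_sum:
  assumes "y < p"
  shows "(\<Sum>z<p. srw p y z) = 1"
proof -
  have "(\<Sum>z<p. srw p y z)
      = (\<Sum>z<p. if z = succ_mod p y then 1/2 else 0) + (\<Sum>z<p. if z = pred_mod p y then 1/2 else 0)"
    unfolding srw_eq[OF assms] by (rule sum.distrib)
  also have "\<dots> = 1"
    using succ_mod_lt[OF assms] pred_mod_lt[OF assms] by simp
  finally show ?thesis .
qed

lemma walk_kernel_row_sum:
  assumes "y < p"
  shows "(\<Sum>z<p. walk_kernel a b p y z) = a + b"
proof -
  have "(\<Sum>z<p. idK y z) = 1"
    using assms by (simp add: idK_def)
  then show ?thesis
    using srw_row_sum[OF assms] by (simp add: walk_kernel_def sum.distrib sum_distrib_left[symmetric])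
qed

lemma reflection_perturbation_walk_kernel:
  assumes "3 \<le> p" and "0 \<le> a" and "0 \<le> b" and "0 \<le> \<theta>"
  shows "reflection_perturbation p (walk_kernel a b p) \<theta>"
proof
  show "0 \<le> walk_kernel a b p y z" for y z
    using assms by (simp add: walk_kernel_def idK_def srw_def)
  show "walk_kernel a b p (neg_mod p y) (neg_mod p z) = walk_kernel a b p y z" if "y < p" "z < p" for y z
    using assms that by (simp add: walk_kernel_def srw_neg_mod idK_neg_mod)
qed (use assms in auto)

lemma doeblin_walk_kernel:
  assumes p: "3 \<le> p" and ab: "0 \<le> a" "0 \<le> b" "a + b = 1" and \<theta>: "0 \<le> \<theta>" "\<theta> < 1" and "1 \<le> L"
    and spectral: "\<And>m. L \<le> m \<Longrightarrow> (\<Sum>k\<in>{1..<p}. \<bar>a + b * cos (2 * pi * real k / real p)\<bar> ^ m) \<le> 1 / 2"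
  shows "doeblin p (walk_kernel a b p) \<theta> L"
proof -
  interpret reflection_perturbation p "walk_kernel a b p" \<theta>
    using reflection_perturbation_walk_kernel p ab \<theta> by blast
  have "1 / (2 * real p) \<le> Pn m x z \<and> Pn m x z \<le> 3 / (2 * real p)"
    if "L \<le> m" "x < p" "z < p" for m x z
  proof -
    have "\<bar>walk_fourier a b p m (real x - real z) - 1 / real p\<bar>
        \<le> (1 / real p) * (\<Sum>k\<in>{1..<p}. \<bar>a + b * cos (2 * pi * real k / real p)\<bar> ^ m)"
      by (rule walk_fourier_deviation_le[OF p_pos ab(3)])
    also have "\<dots> \<le> (1 / real p) * (1 / 2)"
      using spectral[OF that(1)] by (rule mult_left_mono) simp
    finally show ?thesis
      using kprod_walk_kernel[OF p_pos that(2,3)] by (simp add: abs_le_iff field_simps)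
  qed
  then show ?thesis
    using assms walk_kernel_row_sum by unfold_locales auto
qed

lemma srw_0:
  assumes "3 \<le> p" and "z < p"
  shows "srw p 0 z = (if z = 1 then 1/2 else 0) + (if z = p - 1 then 1/2 else 0)"
  using assms srw_eq[of 0 p z] by (simp add: succ_mod_def pred_mod_def)

lemma Delta_0:
  assumes "3 \<le> p"
  shows "Delta p d 0 z = (if z = 1 then d else 0) - (if z = p - 1 then d else 0)"
  using assms by (simp add: Delta_def)

lemma abs_Delta_0_le:
  assumes "3 \<le> p" and "z < p"
  shows "\<bar>Delta p d 0 z\<bar> \<le> 2 * \<bar>d\<bar> * srw p 0 z"
  using assms by (simp add: Delta_0 srw_0)

lemma Delta_0_neg_mod:
  assumes "3 \<le> p" and "z < p"
  shows "Delta p d 0 z + Delta p d 0 (neg_mod p z) = 0"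
  using assms by (auto simp: Delta_0 neg_mod_eq)

lemma admissible_perturbed_walk:
  assumes p: "3 \<le> p" and a: "0 \<le> a" and b: "0 \<le> b" and d: "\<bar>d\<bar> \<le> \<epsilon>"
  shows "reflection_perturbation.admissible p (walk_kernel a b p) (2 * \<epsilon>)
    (\<lambda>y z. a * idK y z + b * Qd p d y z)"
proof -
  interpret reflection_perturbation p "walk_kernel a b p" "2 * \<epsilon>"
    using reflection_perturbation_walk_kernel assms by simp
  have Q_eq: "a * idK y z + b * Qd p d y z = walk_kernel a b p y z + b * Delta p d y z" for y z
    by (simp add: Qd_def walk_kernel_def algebra_simps)
  have "\<bar>b * Delta p d 0 z\<bar> \<le> 2 * \<epsilon> * walk_kernel a b p 0 z" if "z < p" for z
  proof -
    have "\<bar>Delta p d 0 z\<bar> \<le> 2 * \<epsilon> * srw p 0 z"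
      using abs_Delta_0_le[OF p that, of d] d mult_right_mono[of "2 * \<bar>d\<bar>" "2 * \<epsilon>" "srw p 0 z"]
      by (simp add: srw_def)
    then have "\<bar>b * Delta p d 0 z\<bar> \<le> b * (2 * \<epsilon> * srw p 0 z)"
      using b by (simp add: abs_mult mult_left_mono)
    also have "\<dots> \<le> 2 * \<epsilon> * walk_kernel a b p 0 z"
      using a d by (simp add: walk_kernel_def idK_def algebra_simps)
    finally show ?thesis .
  qed
  moreover have "b * Delta p d 0 z + b * Delta p d 0 (neg_mod p z) = 0" if "z < p" for z
    using Delta_0_neg_mod[OF p that] by (simp flip: distrib_left)
  moreover have "Delta p d y z = 0" if "0 < y" for y z
    using that by (simp add: Delta_def)
  ultimately show ?thesis
    unfolding admissible_def Q_eq by simp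
qed

definition ratio_merging_constant :: "real \<Rightarrow> real" where
  "ratio_merging_constant \<epsilon> = 360 * contraction_time (minorization (2 * \<epsilon>)) (initial_spread (2 * \<epsilon>))"

lemma ratio_merging_constant_pos:
  assumes "0 \<le> \<epsilon>" and "\<epsilon> < 1/2"
  shows "0 < ratio_merging_constant \<epsilon>"
proof -
  have "0 \<le> initial_spread (2 * \<epsilon>)"
    using assms by (simp add: initial_spread_def le_divide_eq)
  moreover have "0 < minorization (2 * \<epsilon>)"
    using assms by (simp add: minorization_def)
  ultimately show ?thesis
    unfolding ratio_merging_constant_def contraction_time_def by simp
qed

lemma Qfam_odd_merging:
  fixes N :: nat
  assumes \<epsilon>: "0 \<le> \<epsilon>" "\<epsilon> < 1/2" and "0 < \<eta>"
  defines "T \<equiv> ratio_merging_constant \<epsilon> * real N ^ 2 * (1 + log_plus (1 / \<eta>))"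
  shows "ratio_merging_le (2 * N + 1) (Qfam (2 * N + 1) \<epsilon>) \<eta> T
    \<and> merging_time_le (2 * N + 1) (Qfam (2 * N + 1) \<epsilon>) \<eta> T"
proof (cases "N = 0")
  case True
  then show ?thesis
    using merging_on_singleton \<open>0 < \<eta>\<close> by simp
next
  case False
  define p where "p = 2 * N + 1"
  have "doeblin p (walk_kernel 0 1 p) (2 * \<epsilon>) (360 * N ^ 2)"
    using False \<epsilon> odd_cos_power_sum_le[of N p] by (intro doeblin_walk_kernel) (auto simp: p_def)
  then interpret doeblin p "walk_kernel 0 1 p" "2 * \<epsilon>" "360 * N ^ 2" .
  have "admissible Q" if "Q \<in> Qfam p \<epsilon>" for Q
  proof -
    obtain d where "Q = Qd p d" "\<bar>d\<bar> \<le> \<epsilon>"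
      using \<open>Q \<in> Qfam p \<epsilon>\<close> by (auto simp: Qfam_def)
    then show ?thesis
      using admissible_perturbed_walk[of p 0 1 d \<epsilon>] False by (simp add: p_def)
  qed
  then show ?thesis
    unfolding p_def[symmetric]
    by (rule admissible_family_merging) (use \<open>0 < \<eta>\<close> in \<open>simp_all add: T_def ratio_merging_constant_def\<close>)
qed

lemma Qlazy_even_merging:
  fixes N :: nat
  assumes \<epsilon>: "0 \<le> \<epsilon>" "\<epsilon> < 1/2" and "0 < \<eta>" and N: "3 \<le> 2 * N"
  defines "T \<equiv> ratio_merging_constant \<epsilon> * real N ^ 2 * (1 + log_plus (1 / \<eta>))"
  shows "ratio_merging_le (2 * N) (Qlazy (2 * N) \<epsilon>) \<eta> T \<and> merging_time_le (2 * N) (Qlazy (2 * N) \<epsilon>) \<eta> T"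
proof -
  define p where "p = 2 * N"
  have "doeblin p (walk_kernel (1/2) (1/2) p) (2 * \<epsilon>) (360 * N ^ 2)"
    using N \<epsilon> lazy_cos_power_sum_le[of N p] by (intro doeblin_walk_kernel) (auto simp: p_def)
  then interpret doeblin p "walk_kernel (1/2) (1/2) p" "2 * \<epsilon>" "360 * N ^ 2" .
  have "admissible Q" if "Q \<in> Qlazy p \<epsilon>" for Q
  proof -
    obtain d where Q: "Q = (\<lambda>y z. (idK y z + Qd p d y z) / 2)" and "\<bar>d\<bar> \<le> \<epsilon>"
      using \<open>Q \<in> Qlazy p \<epsilon>\<close> by (auto simp: Qlazy_def Qfam_def)
    have "Q = (\<lambda>y z. 1/2 * idK y z + 1/2 * Qd p d y z)"
      unfolding Q by (simp add: fun_eq_iff field_simps)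
    then show ?thesis
      using admissible_perturbed_walk[of p "1/2" "1/2" d \<epsilon>] \<open>\<bar>d\<bar> \<le> \<epsilon>\<close> N by (simp add: p_def)
  qed
  then show ?thesis
    unfolding p_def[symmetric]
    by (rule admissible_family_merging) (use \<open>0 < \<eta>\<close> in \<open>simp_all add: T_def ratio_merging_constant_def\<close>)
qed

theorem theorem3p5:
  fixes \<epsilon> :: real
  assumes "0 < \<epsilon>" and "\<epsilon> < 1/2"
  shows "\<exists>B::real. 0 < B \<and>
    (\<forall>(N::nat) (\<eta>::real). \<eta> > 0 \<longrightarrow>
      ((2 * N \<ge> 3 \<longrightarrow>
         (\<forall>K. (\<forall>i\<ge>1. K i \<in> Qlazy (2 * N) \<epsilon>) \<longrightarrow>
            (\<forall>n::nat. real n \<ge> B * real N ^ 2 * (1 + log_plus (1 / \<eta>)) \<longrightarrow>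
               (\<forall>x<2 * N. \<forall>y<2 * N. \<forall>z<2 * N.
                  ratio_close (kprod (2 * N) K n x z) (kprod (2 * N) K n y z) \<eta>)))
         \<and> merging_time_le (2 * N) (Qlazy (2 * N) \<epsilon>) \<eta> (B * real N ^ 2 * (1 + log_plus (1 / \<eta>))))
     \<and> (\<forall>K. (\<forall>i\<ge>1. K i \<in> Qfam (2 * N + 1) \<epsilon>) \<longrightarrow>
            (\<forall>n::nat. real n \<ge> B * real N ^ 2 * (1 + log_plus (1 / \<eta>)) \<longrightarrow>
               (\<forall>x<2 * N + 1. \<forall>y<2 * N + 1. \<forall>z<2 * N + 1.
                  ratio_close (kprod (2 * N + 1) K n x z) (kprod (2 * N + 1) K n y z) \<eta>)))
       \<and> merging_time_le (2 * N + 1) (Qfam (2 * N + 1) \<epsilon>) \<eta> (B * real N ^ 2 * (1 + log_plus (1 / \<eta>)))))"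
proof -
  have \<epsilon>: "0 \<le> \<epsilon>" "\<epsilon> < 1/2"
    using assms by auto
  show ?thesis
    using ratio_merging_constant_pos[OF \<epsilon>] Qlazy_even_merging[OF \<epsilon>] Qfam_odd_merging[OF \<epsilon>]
    unfolding ratio_merging_le_def by blast
qed

end
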